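(* Let $\mathcal{G}\subseteq C(\mathbb{R},\mathbb{R})$ be nonempty. The following conditions are equivalent: (1) $\mathcal{K}_\mathcal{G}\subseteq\{\mathrm{CL}(\mathbb{R})\cap\mathcal{P}(X):X\subseteq\mathbb{R}\}$; (2) $\mathcal{G}$ is a complete and connected family.
   Context: Functions are identified with their graphs, so $\bigcup\mathcal{G}\subseteq\mathbb{R}^2$ is the union of graphs. $\mathrm{CL}(\mathbb{R})$ is the family of closed subsets of $\mathbb{R}$ and $\mathcal{P}(X)$ the power set of $X$. A family $\mathcal{G}\subseteq C(\mathbb{R},\mathbb{R})$ is complete if $g\in\mathcal{G}$ for every $g\in C(\mathbb{R},\mathbb{R})$ whose graph is contained in $\bigcup\mathcal{G}$; it is connected if for any $f,g\in\mathcal{G}$ and $x\neq y$ there is $h\in\mathcal{G}$ with $h(x)=f(x)$ and $h(y)=g(y)$. For $\mathcal{G}\subseteq C(\mathbb{R},\mathbb{R})$ let $R_\mathcal{G}=\{(f,E)\in C(\mathbb{R},\mathbb{R})\times\mathrm{CL}(\mathbb{R}):(\exists g\in\mathcal{G})\, f\restriction E=g\restriction E\}$; for $\mathcal{F}\subseteq C(\mathbb{R},\mathbb{R})$ put $E_\mathcal{G}(\mathcal{F})=\{E\in\mathrm{CL}(\mathbb{R}):(\forall f\in\mathcal{F})\,(f,E)\in R_\mathcal{G}\}$, and let $\mathcal{K}_\mathcal{G}=\{E_\mathcal{G}(\mathcal{F}):\mathcal{F}\subseteq C(\mathbb{R},\mathbb{R})\}$. *)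

theory Defs
  imports "HOL-Analysis.Analysis"
begin

definition Cont :: "(real \<Rightarrow> real) set" where
  "Cont = {f. continuous_on UNIV f}"

definition graph_union :: "(real \<Rightarrow> real) set \<Rightarrow> (real \<times> real) set" where
  "graph_union G = (\<Union>g\<in>G. {(x, g x) | x. True})"

definition complete_family :: "(real \<Rightarrow> real) set \<Rightarrow> bool" where
  "complete_family G \<longleftrightarrow>
     (\<forall>g\<in>Cont. {(x, g x) | x. True} \<subseteq> graph_union G \<longrightarrow> g \<in> G)"

definition connected_family :: "(real \<Rightarrow> real) set \<Rightarrow> bool" where
  "connected_family G \<longleftrightarrow>
     (\<forall>f\<in>G. \<forall>g\<in>G. \<forall>x y. x \<noteq> y \<longrightarrow> (\<exists>h\<in>G. h x = f x \<and> h y = g y))"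

definition CL :: "real set set" where
  "CL = {E. closed E}"

definition R_rel :: "(real \<Rightarrow> real) set \<Rightarrow> ((real \<Rightarrow> real) \<times> real set) set" where
  "R_rel G = {(f, E). f \<in> Cont \<and> E \<in> CL \<and> (\<exists>g\<in>G. \<forall>x\<in>E. f x = g x)}"

definition E_fam :: "(real \<Rightarrow> real) set \<Rightarrow> (real \<Rightarrow> real) set \<Rightarrow> real set set" where
  "E_fam G F = {E \<in> CL. \<forall>f\<in>F. (f, E) \<in> R_rel G}"

definition K_fam :: "(real \<Rightarrow> real) set \<Rightarrow> real set set set" where
  "K_fam G = {E_fam G F | F. F \<subseteq> Cont}"

end

theory Submission
  imports Defs
begin

text \<open>
  The condition on \<open>\<K>\<^sub>G\<close> says that agreement of a continuous \<open>f\<close> with \<open>G\<close> on a closed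
  set \<open>E\<close> is decided pointwise: if at every point of \<open>E\<close> some member of \<open>G\<close> agrees with \<open>f\<close>,
  then one member of \<open>G\<close> agrees with \<open>f\<close> on all of \<open>E\<close>. Taking \<open>E = \<real>\<close> gives
  completeness, and taking for \<open>f\<close> the line through \<open>(x, f x)\<close> and \<open>(y, g y)\<close> with
  \<open>E = {x, y}\<close> gives connectedness.

  Conversely, completeness says that a continuous function whose graph lies in \<open>\<Union>G\<close> belongs
  to \<open>G\<close>; in particular \<open>G\<close> is closed under pasting at common points and under pointwise
  medians. So it suffices to extend \<open>f\<restriction>E\<close> continuously inside \<open>\<Union>G\<close>. On each bounded gap
  \<open>(a, b)\<close> of \<open>E\<close> use a member of \<open>G\<close> through \<open>(a, f a)\<close> and \<open>(b, f b)\<close> whose deviation from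
  \<open>f a\<close> on \<open>[a, b]\<close> is within \<open>b - a\<close> of the least possible. Near a point \<open>p \<in> E\<close> the least
  deviation is small: switch, by connectedness and medians, from a member through \<open>(a, f a)\<close>
  to one through \<open>(p, f p)\<close> and on to one through \<open>(b, f b)\<close>. This gives continuity at the
  points of \<open>E\<close>.
\<close>

lemma isCont_real_eps:
  fixes g :: "real \<Rightarrow> real"
  assumes "isCont g x" "e > 0"
  shows "\<exists>d>0. \<forall>y. \<bar>y - x\<bar> < d \<longrightarrow> \<bar>g y - g x\<bar> < e"
  using assms unfolding continuous_at_eps_delta dist_real_def by blast

lemma closed_Sup_Int_atMost:
  fixes E :: "real set"
  assumes "closed E" "a \<in> E" "a \<le> y"
  shows "Sup (E \<inter> {..y}) \<in> E" "a \<le> Sup (E \<inter> {..y})" "Sup (E \<inter> {..y}) \<le> y"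
proof -
  have bdd: "bdd_above (E \<inter> {..y})" by (rule bdd_aboveI[of _ y]) auto
  have "Sup (E \<inter> {..y}) \<in> E \<inter> {..y}"
    using assms by (intro closed_contains_Sup bdd) auto
  then show "Sup (E \<inter> {..y}) \<in> E" "Sup (E \<inter> {..y}) \<le> y" by auto
  show "a \<le> Sup (E \<inter> {..y})" using assms by (intro cSup_upper bdd) auto
qed

lemma closed_Inf_Int_atLeast:
  fixes E :: "real set"
  assumes "closed E" "b \<in> E" "y \<le> b"
  shows "Inf (E \<inter> {y..}) \<in> E" "Inf (E \<inter> {y..}) \<le> b" "y \<le> Inf (E \<inter> {y..})"
proof -
  have bdd: "bdd_below (E \<inter> {y..})" by (rule bdd_belowI[of _ y]) auto
  have "Inf (E \<inter> {y..}) \<in> E \<inter> {y..}"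
    using assms by (intro closed_contains_Inf bdd) auto
  then show "Inf (E \<inter> {y..}) \<in> E" "y \<le> Inf (E \<inter> {y..})" by auto
  show "Inf (E \<inter> {y..}) \<le> b" using assms by (intro cInf_lower bdd) auto
qed

lemma tendsto_at_right_if_bracketed:
  fixes h :: "real \<Rightarrow> real"
  assumes "p \<in> E"
    and bracketed: "\<And>\<epsilon>. \<epsilon> > 0 \<Longrightarrow> \<exists>d>0. \<forall>a\<in>E. \<forall>b\<in>E.
          \<bar>a - p\<bar> < d \<longrightarrow> \<bar>b - p\<bar> < d \<longrightarrow> (\<forall>y\<in>{a..b}. \<bar>h y - l\<bar> < \<epsilon>)"
    and isolated: "\<And>y. p < y \<Longrightarrow> {p<..y} \<inter> E = {} \<Longrightarrow> (h \<longlongrightarrow> l) (at_right p)"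
  shows "(h \<longlongrightarrow> l) (at_right p)"
proof (cases "\<exists>y>p. {p<..y} \<inter> E = {}")
  case True
  then show ?thesis using isolated by blast
next
  case False
  show ?thesis
  proof (rule tendstoI)
    fix \<epsilon> :: real assume "\<epsilon> > 0"
    then obtain d where "d > 0" and d: "\<forall>a\<in>E. \<forall>b\<in>E.
        \<bar>a - p\<bar> < d \<longrightarrow> \<bar>b - p\<bar> < d \<longrightarrow> (\<forall>y\<in>{a..b}. \<bar>h y - l\<bar> < \<epsilon>)"
      using bracketed by blast
    have "{p<..p + d / 2} \<inter> E \<noteq> {}" using False \<open>d > 0\<close> by simp
    then obtain b where "b \<in> E" "p < b" "b \<le> p + d / 2" by auto
    then have "\<forall>y. p < y \<longrightarrow> y < b \<longrightarrow> dist (h y) l < \<epsilon>"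
      using d \<open>p \<in> E\<close> \<open>d > 0\<close> unfolding dist_real_def by auto
    then show "\<forall>\<^sub>F y in at_right p. dist (h y) l < \<epsilon>"
      unfolding eventually_at_right_field using \<open>p < b\<close> by blast
  qed
qed

lemma tendsto_at_if_bracketed:
  fixes h :: "real \<Rightarrow> real"
  assumes "p \<in> E"
    and bracketed: "\<And>\<epsilon>. \<epsilon> > 0 \<Longrightarrow> \<exists>d>0. \<forall>a\<in>E. \<forall>b\<in>E.
          \<bar>a - p\<bar> < d \<longrightarrow> \<bar>b - p\<bar> < d \<longrightarrow> (\<forall>y\<in>{a..b}. \<bar>h y - l\<bar> < \<epsilon>)"
    and isolated_right: "\<And>y. p < y \<Longrightarrow> {p<..y} \<inter> E = {} \<Longrightarrow> (h \<longlongrightarrow> l) (at_right p)"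
    and isolated_left: "\<And>y. y < p \<Longrightarrow> {y..<p} \<inter> E = {} \<Longrightarrow> (h \<longlongrightarrow> l) (at_left p)"
  shows "(h \<longlongrightarrow> l) (at p)"
proof (rule filterlim_split_at)
  show "(h \<longlongrightarrow> l) (at_right p)"
    using assms(1) bracketed isolated_right by (rule tendsto_at_right_if_bracketed)
  have "((\<lambda>x. h (- x)) \<longlongrightarrow> l) (at_right (- p))"
  proof (rule tendsto_at_right_if_bracketed[where E = "uminus ` E"])
    show "- p \<in> uminus ` E" using assms(1) by blast
  next
    fix \<epsilon> :: real assume "\<epsilon> > 0"
    then obtain d where "d > 0" and d: "\<forall>a\<in>E. \<forall>b\<in>E.
        \<bar>a - p\<bar> < d \<longrightarrow> \<bar>b - p\<bar> < d \<longrightarrow> (\<forall>y\<in>{a..b}. \<bar>h y - l\<bar> < \<epsilon>)"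
      using bracketed by blast
    have "\<forall>a\<in>uminus ` E. \<forall>b\<in>uminus ` E. \<bar>a - - p\<bar> < d \<longrightarrow> \<bar>b - - p\<bar> < d \<longrightarrow>
        (\<forall>y\<in>{a..b}. \<bar>h (- y) - l\<bar> < \<epsilon>)"
    proof (intro ballI impI)
      fix a b y assume "a \<in> uminus ` E" "b \<in> uminus ` E" "\<bar>a - - p\<bar> < d" "\<bar>b - - p\<bar> < d"
        "y \<in> {a..b}"
      then show "\<bar>h (- y) - l\<bar> < \<epsilon>" using d[rule_format, of "- b" "- a" "- y"] by auto
    qed
    then show "\<exists>d>0. \<forall>a\<in>uminus ` E. \<forall>b\<in>uminus ` E. \<bar>a - - p\<bar> < d \<longrightarrow> \<bar>b - - p\<bar> < d \<longrightarrow>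
        (\<forall>y\<in>{a..b}. \<bar>h (- y) - l\<bar> < \<epsilon>)"
      using \<open>d > 0\<close> by blast
  next
    fix y assume "- p < y" "{- p<..y} \<inter> uminus ` E = {}"
    then have "{- y..<p} \<inter> E = {}" by (auto simp: disjoint_iff) (metis image_eqI minus_le_iff neg_less_iff_less)
    then show "((\<lambda>x. h (- x)) \<longlongrightarrow> l) (at_right (- p))"
      using isolated_left[of "- y"] \<open>- p < y\<close> filterlim_at_left_to_right by auto
  qed
  then show "(h \<longlongrightarrow> l) (at_left p)" by (simp add: filterlim_at_left_to_right)
qed

locale complete_connected_family =
  fixes G :: "(real \<Rightarrow> real) set"
  assumes subset_Cont: "G \<subseteq> Cont" and nonempty: "G \<noteq> {}"
    and complete: "complete_family G" and connected: "connected_family G"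
begin

lemma isCont: "g \<in> G \<Longrightarrow> isCont g x"
  using subset_Cont continuous_on_eq_continuous_at[of UNIV g] unfolding Cont_def by auto

lemma mem_if_pointwise:
  assumes "continuous_on UNIV h" "\<And>x. \<exists>g\<in>G. h x = g x"
  shows "h \<in> G"
proof -
  have "{(x, h x) | x. True} \<subseteq> graph_union G"
    using assms(2) unfolding graph_union_def by fastforce
  then show ?thesis using assms(1) complete unfolding complete_family_def Cont_def by blast
qed

lemma connect:
  assumes "g \<in> G" "h \<in> G" "s \<noteq> t"
  obtains k where "k \<in> G" "k s = g s" "k t = h t"
  using assms connected unfolding connected_family_def by blast

lemma paste_mem:
  assumes "g \<in> G" "h \<in> G" "g t = h t"
  shows "(\<lambda>y. if y \<le> t then g y else h y) \<in> G"
proof (rule mem_if_pointwise)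
  have "continuous_on UNIV g" "continuous_on UNIV h"
    using assms subset_Cont unfolding Cont_def by auto
  then show "continuous_on UNIV (\<lambda>y. if y \<le> t then g y else h y)"
    using assms(3) by (intro continuous_on_cases_le) (auto intro: continuous_on_subset)
  show "\<exists>k\<in>G. (if y \<le> t then g y else h y) = k y" for y
    using assms by auto
qed

lemma switch:
  assumes "g \<in> G" "h \<in> G" "s \<noteq> t"
  obtains k where "k \<in> G" "k s = g s" "k t = h t"
    "\<And>y. min (g y) (h y) \<le> k y \<and> k y \<le> max (g y) (h y)"
proof -
  obtain c where c: "c \<in> G" "c s = g s" "c t = h t" using connect assms .
  define k where "k y = max (min (g y) (h y)) (min (max (g y) (h y)) (c y))" for y
  have "k \<in> G"
  proof (rule mem_if_pointwise)
    have "continuous_on UNIV g" "continuous_on UNIV h" "continuous_on UNIV c"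
      using assms c subset_Cont unfolding Cont_def by auto
    then show "continuous_on UNIV k" unfolding k_def by (intro continuous_intros)
    show "\<exists>j\<in>G. k y = j y" for y
      using assms c unfolding k_def by (cases "k y = g y \<or> k y = h y") (auto simp: k_def max_def min_def)
  qed
  moreover have "k s = g s" "k t = h t" using c unfolding k_def by auto
  moreover have "min (g y) (h y) \<le> k y \<and> k y \<le> max (g y) (h y)" for y
    unfolding k_def by linarith
  ultimately show thesis using that by blast
qed


lemma join_within_band:
  assumes "g \<in> G" "h \<in> G" "m \<in> G" "a < b"
    and "\<bar>g a - c\<bar> < e" "\<bar>h b - c\<bar> < e" "\<forall>y\<in>{a..b}. \<bar>m y - c\<bar> \<le> e"
  obtains k where "k \<in> G" "k a = g a" "k b = h b" "\<forall>y\<in>{a..b}. \<bar>k y - c\<bar> \<le> e"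
proof -
  have "(g \<longlongrightarrow> g a) (at_right a)"
    using isCont[OF \<open>g \<in> G\<close>] unfolding isCont_def filterlim_at_split by blast
  then have "((\<lambda>y. \<bar>g y - c\<bar>) \<longlongrightarrow> \<bar>g a - c\<bar>) (at_right a)"
    by (intro tendsto_intros)
  then have "\<forall>\<^sub>F y in at_right a. \<bar>g y - c\<bar> < e"
    using assms(5) by (rule order_tendstoD)
  then obtain a' where "a < a'" and a': "\<forall>y. a < y \<longrightarrow> y < a' \<longrightarrow> \<bar>g y - c\<bar> < e"
    unfolding eventually_at_right_field by blast
  have "(h \<longlongrightarrow> h b) (at_left b)"
    using isCont[OF \<open>h \<in> G\<close>] unfolding isCont_def filterlim_at_split by blast
  then have "((\<lambda>y. \<bar>h y - c\<bar>) \<longlongrightarrow> \<bar>h b - c\<bar>) (at_left b)"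
    by (intro tendsto_intros)
  then have "\<forall>\<^sub>F y in at_left b. \<bar>h y - c\<bar> < e"
    using assms(6) by (rule order_tendstoD)
  then obtain b' where "b' < b" and b': "\<forall>y. b' < y \<longrightarrow> y < b \<longrightarrow> \<bar>h y - c\<bar> < e"
    unfolding eventually_at_left_field by blast
  define t1 where "t1 = min ((a + a') / 2) ((a + b) / 2)"
  define t2 where "t2 = max ((b' + b) / 2) ((a + b) / 2)"
  have t: "a < t1" "t1 \<le> t2" "t2 < b" "t1 < a'" "b' < t2"
    using \<open>a < b\<close> \<open>a < a'\<close> \<open>b' < b\<close> unfolding t1_def t2_def by (auto simp: min_def max_def)
  obtain k1 where k1: "k1 \<in> G" "k1 a = g a" "k1 t1 = m t1"
    and k1_between: "\<And>y. min (g y) (m y) \<le> k1 y \<and> k1 y \<le> max (g y) (m y)"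
    using switch[OF \<open>g \<in> G\<close> \<open>m \<in> G\<close>, of a t1] t by (metis order.irrefl)
  obtain k2 where k2: "k2 \<in> G" "k2 t2 = m t2" "k2 b = h b"
    and k2_between: "\<And>y. min (m y) (h y) \<le> k2 y \<and> k2 y \<le> max (m y) (h y)"
    using switch[OF \<open>m \<in> G\<close> \<open>h \<in> G\<close>, of t2 b] t by (metis order.irrefl)
  define k where "k = (\<lambda>y. if y \<le> t2 then if y \<le> t1 then k1 y else m y else k2 y)"
  have "(\<lambda>y. if y \<le> t1 then k1 y else m y) \<in> G"
    using k1 \<open>m \<in> G\<close> by (intro paste_mem) auto
  from paste_mem[OF this \<open>k2 \<in> G\<close>, of t2] have "k \<in> G"
    unfolding k_def using k1 k2 t by auto
  moreover have "k a = g a" "k b = h b" using k1 k2 t unfolding k_def by auto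
  moreover have "\<bar>k y - c\<bar> \<le> e" if "y \<in> {a..b}" for y
  proof -
    have between: "\<bar>w - c\<bar> \<le> e"
      if "min u v \<le> w \<and> w \<le> max u v" "\<bar>u - c\<bar> \<le> e" "\<bar>v - c\<bar> \<le> e" for u v w
      using that by (simp add: abs_le_iff min_def max_def split: if_splits)
    have m: "\<bar>m y - c\<bar> \<le> e" using assms(7) that by blast
    consider "y \<le> t1" | "t1 < y" "y \<le> t2" | "t2 < y" by linarith
    then show ?thesis
    proof cases
      case 1
      have g: "\<bar>g y - c\<bar> \<le> e"
        using 1 a' t that assms(5) by (cases "y = a") (auto simp: less_imp_le)
      show ?thesis using 1 t between[OF k1_between[of y] g m] unfolding k_def by simp
    next
      case 2
      then show ?thesis using m unfolding k_def by simp
    next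
      case 3
      have h: "\<bar>h y - c\<bar> \<le> e"
        using 3 b' t that assms(6) by (cases "y = b") (auto simp: less_imp_le)
      show ?thesis using 3 t between[OF k2_between[of y] m h] unfolding k_def by simp
    qed
  qed
  ultimately show thesis using that by blast
qed

end

locale pointwise_agreement = complete_connected_family +
  fixes f :: "real \<Rightarrow> real" and E :: "real set"
  assumes continuous_f: "continuous_on UNIV f" and closed_E: "closed E"
    and pointwise: "\<And>x. x \<in> E \<Longrightarrow> \<exists>g\<in>G. f x = g x"
begin

lemma isCont_f: "isCont f x"
  using continuous_f continuous_on_eq_continuous_at[of UNIV f] by simp

definition through :: "real \<Rightarrow> real \<Rightarrow> real" where
  "through a = (SOME g. g \<in> G \<and> g a = f a)"

lemma through: "a \<in> E \<Longrightarrow> through a \<in> G \<and> through a a = f a"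
  unfolding through_def using pointwise by (metis (mono_tags, lifting) someI_ex)

definition bridge_bounds :: "real \<Rightarrow> real \<Rightarrow> real set" where
  "bridge_bounds a b = {r. \<exists>k\<in>G. k a = f a \<and> k b = f b \<and> (\<forall>y\<in>{a..b}. \<bar>k y - f a\<bar> \<le> r)}"

lemma bridge_exists:
  assumes "a \<in> E" "b \<in> E" "a < b"
  shows "\<exists>k. k \<in> G \<and> k a = f a \<and> k b = f b \<and>
    (\<forall>r\<in>bridge_bounds a b. \<forall>y\<in>{a..b}. \<bar>k y - f a\<bar> \<le> r + (b - a))"
proof -
  obtain k0 where k0: "k0 \<in> G" "k0 a = f a" "k0 b = f b"
    using connect[of "through a" "through b" a b] through assms by force
  have "continuous_on {a..b} (\<lambda>y. \<bar>k0 y - f a\<bar>)"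
    using isCont[OF \<open>k0 \<in> G\<close>] by (intro continuous_intros continuous_at_imp_continuous_on) auto
  then obtain x where "\<forall>y\<in>{a..b}. \<bar>k0 y - f a\<bar> \<le> \<bar>k0 x - f a\<bar>"
    using continuous_attains_sup[of "{a..b}"] \<open>a < b\<close> by fastforce
  then have nonempty: "bridge_bounds a b \<noteq> {}"
    using k0 unfolding bridge_bounds_def by blast
  have bdd: "bdd_below (bridge_bounds a b)"
    using \<open>a < b\<close> unfolding bridge_bounds_def by (intro bdd_belowI[of _ 0]) force
  obtain r1 where "r1 \<in> bridge_bounds a b" "r1 < Inf (bridge_bounds a b) + (b - a)"
    using cInf_lessD[OF nonempty, of "Inf (bridge_bounds a b) + (b - a)"] \<open>a < b\<close> by auto
  moreover obtain k where "k \<in> G" "k a = f a" "k b = f b" "\<forall>y\<in>{a..b}. \<bar>k y - f a\<bar> \<le> r1"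
    using \<open>r1 \<in> bridge_bounds a b\<close> unfolding bridge_bounds_def by blast
  moreover have "Inf (bridge_bounds a b) \<le> r" if "r \<in> bridge_bounds a b" for r
    using that bdd by (rule cInf_lower)
  ultimately show ?thesis by (metis add_le_cancel_right less_eq_real_def order_trans)
qed

text \<open>The slack \<open>b - a\<close> vanishes on small gaps; this is what makes the gap-by-gap choice
  of bridges uniform near each point of \<open>E\<close>.\<close>
definition bridge :: "real \<Rightarrow> real \<Rightarrow> real \<Rightarrow> real" where
  "bridge a b = (SOME k. k \<in> G \<and> k a = f a \<and> k b = f b \<and>
    (\<forall>r\<in>bridge_bounds a b. \<forall>y\<in>{a..b}. \<bar>k y - f a\<bar> \<le> r + (b - a)))"

lemma bridge:
  assumes "a \<in> E" "b \<in> E" "a < b"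
  shows "bridge a b \<in> G" "bridge a b a = f a" "bridge a b b = f b"
    and "r \<in> bridge_bounds a b \<Longrightarrow> y \<in> {a..b} \<Longrightarrow> \<bar>bridge a b y - f a\<bar> \<le> r + (b - a)"
  using someI_ex[OF bridge_exists[OF assms]] unfolding bridge_def[symmetric] by blast+

lemma bridge_bounds_near:
  assumes "p \<in> E" "e > 0"
  shows "\<exists>d>0. \<forall>a\<in>E. \<forall>b\<in>E. a < b \<longrightarrow> \<bar>a - p\<bar> < d \<longrightarrow> \<bar>b - p\<bar> < d \<longrightarrow>
    2 * e \<in> bridge_bounds a b"
proof -
  obtain d1 where "d1 > 0" and d1: "\<And>y. \<bar>y - p\<bar> < d1 \<Longrightarrow> \<bar>f y - f p\<bar> < e"
    using isCont_real_eps[OF isCont_f \<open>e > 0\<close>] by blast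
  obtain gp where gp: "gp \<in> G" "gp p = f p" using through \<open>p \<in> E\<close> by blast
  obtain d2 where "d2 > 0" and d2: "\<And>y. \<bar>y - p\<bar> < d2 \<Longrightarrow> \<bar>gp y - f p\<bar> < e"
    using isCont_real_eps[OF isCont[OF \<open>gp \<in> G\<close>, of p] \<open>e > 0\<close>] unfolding gp(2) by blast
  have "2 * e \<in> bridge_bounds a b"
    if "a \<in> E" "b \<in> E" "a < b" "\<bar>a - p\<bar> < min d1 d2" "\<bar>b - p\<bar> < min d1 d2" for a b
  proof -
    have band: "\<forall>y\<in>{a..b}. \<bar>gp y - f p\<bar> \<le> e"
    proof
      fix y assume "y \<in> {a..b}"
      then have "\<bar>y - p\<bar> < d2" using that by (auto simp: abs_less_iff)
      then show "\<bar>gp y - f p\<bar> \<le> e" using d2 by (simp add: less_imp_le)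
    qed
    have ta: "through a \<in> G" "through a a = f a" and tb: "through b \<in> G" "through b b = f b"
      using through that by auto
    have "\<bar>through a a - f p\<bar> < e" "\<bar>through b b - f p\<bar> < e"
      using ta tb d1 that by auto
    then obtain k where k: "k \<in> G" "k a = through a a" "k b = through b b"
      and k_band: "\<forall>y\<in>{a..b}. \<bar>k y - f p\<bar> \<le> e"
      using join_within_band[OF ta(1) tb(1) \<open>gp \<in> G\<close> \<open>a < b\<close> _ _ band] by blast
    have "\<bar>f a - f p\<bar> < e" using d1 that by auto
    then have "\<forall>y\<in>{a..b}. \<bar>k y - f a\<bar> \<le> 2 * e"
      using k_band unfolding abs_le_iff abs_less_iff by fastforce
    then show ?thesis using k ta tb unfolding bridge_bounds_def by auto
  qed
  then show ?thesis using \<open>d1 > 0\<close> \<open>d2 > 0\<close> by (intro exI[of _ "min d1 d2"]) auto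
qed

definition lower :: "real \<Rightarrow> real" where
  "lower y = Sup (E \<inter> {..y})"

definition upper :: "real \<Rightarrow> real" where
  "upper y = Inf (E \<inter> {y..})"

lemma lower: "a \<in> E \<Longrightarrow> a \<le> y \<Longrightarrow> lower y \<in> E \<and> a \<le> lower y \<and> lower y \<le> y"
  unfolding lower_def using closed_Sup_Int_atMost[OF closed_E] by blast

lemma upper: "b \<in> E \<Longrightarrow> y \<le> b \<Longrightarrow> upper y \<in> E \<and> upper y \<le> b \<and> y \<le> upper y"
  unfolding upper_def using closed_Inf_Int_atLeast[OF closed_E] by blast

text \<open>For \<open>y \<notin> E\<close>, \<open>lower y\<close> and \<open>upper y\<close> are the endpoints (when they exist) of the
  component of \<open>-E\<close> containing \<open>y\<close>, so \<open>gap_fun y\<close> depends only on that component.\<close>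
definition gap_fun :: "real \<Rightarrow> real \<Rightarrow> real" where
  "gap_fun y =
    (if E \<inter> {..y} \<noteq> {} \<and> E \<inter> {y..} \<noteq> {} then bridge (lower y) (upper y)
     else if E \<inter> {..y} \<noteq> {} then through (lower y)
     else if E \<inter> {y..} \<noteq> {} then through (upper y)
     else (SOME g. g \<in> G))"

definition extension :: "real \<Rightarrow> real" where
  "extension y = (if y \<in> E then f y else gap_fun y y)"

lemma gap_fun_mem:
  assumes "y \<notin> E"
  shows "gap_fun y \<in> G"
proof -
  have lo: "lower y \<in> E \<and> lower y < y" if "E \<inter> {..y} \<noteq> {}"
    using that lower assms by (metis IntD1 IntD2 atMost_iff ex_in_conv order_le_less)
  have hi: "upper y \<in> E \<and> y < upper y" if "E \<inter> {y..} \<noteq> {}"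
    using that upper assms by (metis IntD1 IntD2 atLeast_iff ex_in_conv order_le_less)
  show ?thesis
  proof (cases "E \<inter> {..y} = {}"; cases "E \<inter> {y..} = {}")
    assume "E \<inter> {..y} = {}" "E \<inter> {y..} = {}"
    then show ?thesis by (simp add: gap_fun_def some_in_eq nonempty)
  next
    assume "E \<inter> {..y} = {}" "E \<inter> {y..} \<noteq> {}"
    then show ?thesis using hi through by (simp add: gap_fun_def)
  next
    assume "E \<inter> {..y} \<noteq> {}" "E \<inter> {y..} = {}"
    then show ?thesis using lo through by (simp add: gap_fun_def)
  next
    assume "E \<inter> {..y} \<noteq> {}" "E \<inter> {y..} \<noteq> {}"
    then show ?thesis using lo hi bridge(1) by (simp add: gap_fun_def)
  qed
qed

lemma gap_fun_cong:
  assumes gap: "E \<inter> {min x y..max x y} = {}"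
  shows "gap_fun x = gap_fun y"
proof -
  have "z \<le> x \<longleftrightarrow> z \<le> y" "x \<le> z \<longleftrightarrow> y \<le> z" if "z \<in> E" for z
    using gap that by (cases "x \<le> y"; auto simp: disjoint_iff min_def max_def)+
  then have "E \<inter> {..x} = E \<inter> {..y}" "E \<inter> {x..} = E \<inter> {y..}" by auto
  then show ?thesis unfolding gap_fun_def lower_def upper_def by simp
qed

lemma extension_eq_gap_fun: "E \<inter> {min x y..max x y} = {} \<Longrightarrow> extension x = gap_fun y x"
  unfolding extension_def using gap_fun_cong by (auto simp: disjoint_iff)

lemma gap_fun_at_lower_end:
  assumes "p \<in> E" "p < y" "{p<..y} \<inter> E = {}"
  shows "gap_fun y p = f p"
proof -
  have "lower y \<in> E" "p \<le> lower y" "lower y \<le> y"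
    using lower[OF assms(1) less_imp_le[OF assms(2)]] by auto
  then have "lower y = p" using assms(3) by (cases "p < lower y") auto
  have below: "E \<inter> {..y} \<noteq> {}" using assms by auto
  show ?thesis
  proof (cases "E \<inter> {y..} = {}")
    case True
    then have "gap_fun y = through p" using below \<open>lower y = p\<close> by (simp add: gap_fun_def)
    then show ?thesis using through assms(1) by simp
  next
    case False
    then obtain b where "b \<in> E" "y \<le> b" by auto
    then have "upper y \<in> E" "p < upper y" using upper assms(2) by fastforce+
    moreover have "gap_fun y = bridge p (upper y)"
      using False below \<open>lower y = p\<close> by (simp add: gap_fun_def)
    ultimately show ?thesis using bridge(2) assms(1) by simp
  qed
qed

lemma gap_fun_at_upper_end:
  assumes "p \<in> E" "y < p" "{y..<p} \<inter> E = {}"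
  shows "gap_fun y p = f p"
proof -
  have "upper y \<in> E" "upper y \<le> p" "y \<le> upper y"
    using upper[OF assms(1) less_imp_le[OF assms(2)]] by auto
  then have "upper y = p" using assms(3) by (cases "upper y < p") auto
  have above: "E \<inter> {y..} \<noteq> {}" using assms by auto
  show ?thesis
  proof (cases "E \<inter> {..y} = {}")
    case True
    then have "gap_fun y = through p" using above \<open>upper y = p\<close> by (simp add: gap_fun_def)
    then show ?thesis using through assms(1) by simp
  next
    case False
    then obtain a where "a \<in> E" "a \<le> y" by auto
    then have "lower y \<in> E" "lower y < p" using lower assms(2) by fastforce+
    moreover have "gap_fun y = bridge (lower y) p"
      using False above \<open>upper y = p\<close> by (simp add: gap_fun_def)
    ultimately show ?thesis using bridge(3) assms(1) by simp
  qed
qed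

lemma isCont_extension_off_E:
  assumes "x \<notin> E"
  shows "isCont extension x"
proof -
  obtain r where "r > 0" and r: "ball x r \<subseteq> - E"
    using open_contains_ball_eq[of "- E" x] closed_E assms by (auto simp: open_Compl)
  have "extension y = gap_fun x y" if "y \<in> ball x r" for y
  proof (rule extension_eq_gap_fun)
    have "{min y x..max y x} \<subseteq> ball x r"
      using that by (auto simp: dist_real_def min_def max_def abs_less_iff split: if_splits)
    then show "E \<inter> {min y x..max y x} = {}" using r by blast
  qed
  then have "\<forall>\<^sub>F y in nhds x. extension y = gap_fun x y"
    unfolding eventually_nhds using \<open>r > 0\<close> by (intro exI[of _ "ball x r"]) auto
  then show ?thesis using isCont_cong isCont[OF gap_fun_mem[OF assms]] by blast
qed

lemma extension_tendsto_at_right_isolated: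
  assumes "p \<in> E" "p < y" "{p<..y} \<inter> E = {}"
  shows "(extension \<longlongrightarrow> f p) (at_right p)"
proof -
  have "y \<notin> E" using assms by auto
  then have "(gap_fun y \<longlongrightarrow> f p) (at_right p)"
    using isCont[OF gap_fun_mem, of y p] gap_fun_at_lower_end[OF assms]
    unfolding isCont_def filterlim_at_split by auto
  moreover have "\<forall>\<^sub>F z in at_right p. gap_fun y z = extension z"
    using eventually_at_right_real[OF assms(2)]
  proof eventually_elim
    case (elim z)
    then have "{min z y..max z y} \<subseteq> {p<..y}" by auto
    then have "E \<inter> {min z y..max z y} = {}" using assms(3) by blast
    then show ?case by (simp add: extension_eq_gap_fun)
  qed
  ultimately show ?thesis by (rule Lim_transform_eventually)
qed

lemma extension_tendsto_at_left_isolated: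
  assumes "p \<in> E" "y < p" "{y..<p} \<inter> E = {}"
  shows "(extension \<longlongrightarrow> f p) (at_left p)"
proof -
  have "y \<notin> E" using assms by auto
  then have "(gap_fun y \<longlongrightarrow> f p) (at_left p)"
    using isCont[OF gap_fun_mem, of y p] gap_fun_at_upper_end[OF assms]
    unfolding isCont_def filterlim_at_split by auto
  moreover have "\<forall>\<^sub>F z in at_left p. gap_fun y z = extension z"
    using eventually_at_left_real[OF assms(2)]
  proof eventually_elim
    case (elim z)
    then have "{min z y..max z y} \<subseteq> {y..<p}" by auto
    then have "E \<inter> {min z y..max z y} = {}" using assms(3) by blast
    then show ?case by (simp add: extension_eq_gap_fun)
  qed
  ultimately show ?thesis by (rule Lim_transform_eventually)
qed

lemma extension_bracketed:
  assumes "p \<in> E" "\<epsilon> > 0"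
  shows "\<exists>d>0. \<forall>a\<in>E. \<forall>b\<in>E.
    \<bar>a - p\<bar> < d \<longrightarrow> \<bar>b - p\<bar> < d \<longrightarrow> (\<forall>y\<in>{a..b}. \<bar>extension y - f p\<bar> < \<epsilon>)"
proof -
  define e where "e = \<epsilon> / 5"
  have "e > 0" using \<open>\<epsilon> > 0\<close> unfolding e_def by simp
  obtain d0 where "d0 > 0" and d0: "\<forall>a\<in>E. \<forall>b\<in>E. a < b \<longrightarrow> \<bar>a - p\<bar> < d0 \<longrightarrow> \<bar>b - p\<bar> < d0 \<longrightarrow>
      2 * e \<in> bridge_bounds a b"
    using bridge_bounds_near[OF assms(1) \<open>e > 0\<close>] by blast
  obtain df where "df > 0" and df: "\<And>y. \<bar>y - p\<bar> < df \<Longrightarrow> \<bar>f y - f p\<bar> < e"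
    using isCont_real_eps[OF isCont_f \<open>e > 0\<close>] by blast
  define d where "d = min d0 (min df e)"
  have "d > 0" "d \<le> d0" "d \<le> df" "d \<le> e"
    using \<open>d0 > 0\<close> \<open>df > 0\<close> \<open>e > 0\<close> unfolding d_def by auto
  have "\<bar>extension y - f p\<bar> < \<epsilon>"
    if ab: "a \<in> E" "b \<in> E" "\<bar>a - p\<bar> < d" "\<bar>b - p\<bar> < d" and y: "a \<le> y" "y \<le> b" for a b y
  proof (cases "y \<in> E")
    case True
    then have "extension y = f y" by (simp add: extension_def)
    moreover have "\<bar>y - p\<bar> < df" using ab y \<open>d \<le> df\<close> by (simp add: abs_less_iff)
    ultimately show ?thesis using df \<open>e > 0\<close> unfolding e_def by fastforce
  next
    case False
    define lo hi where "lo = lower y" and "hi = upper y"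
    have lo: "lo \<in> E" "a \<le> lo" "lo < y"
      using lower[OF ab(1) y(1)] False unfolding lo_def by (metis order_le_less)+
    have hi: "hi \<in> E" "hi \<le> b" "y < hi"
      using upper[OF ab(2) y(2)] False unfolding hi_def by (metis order_le_less)+
    have "E \<inter> {..y} \<noteq> {}" "E \<inter> {y..} \<noteq> {}" using ab y by auto
    then have "extension y = bridge lo hi y"
      using False by (simp add: extension_def gap_fun_def lo_def hi_def)
    moreover have "\<bar>lo - p\<bar> < d" "\<bar>hi - p\<bar> < d"
      using ab lo hi y by (simp_all add: abs_less_iff)
    then have "2 * e \<in> bridge_bounds lo hi"
      using d0 lo hi \<open>d \<le> d0\<close> by simp
    then have "\<bar>bridge lo hi y - f lo\<bar> \<le> 2 * e + (hi - lo)"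
      using bridge(4)[OF lo(1) hi(1)] lo(3) hi(3) by simp
    moreover have "hi - lo < 2 * e"
      using \<open>\<bar>lo - p\<bar> < d\<close> \<open>\<bar>hi - p\<bar> < d\<close> \<open>d \<le> e\<close> by (simp add: abs_less_iff)
    moreover have "\<bar>f lo - f p\<bar> < e"
      using \<open>\<bar>lo - p\<bar> < d\<close> \<open>d \<le> df\<close> df by simp
    ultimately show ?thesis unfolding e_def abs_le_iff abs_less_iff by linarith
  qed
  then show ?thesis using \<open>d > 0\<close> by (intro exI[of _ d]) auto
qed

lemma isCont_extension: "isCont extension x"
proof (cases "x \<in> E")
  case True
  have "(extension \<longlongrightarrow> f x) (at x)"
    using True extension_bracketed[OF True] extension_tendsto_at_right_isolated[OF True]
      extension_tendsto_at_left_isolated[OF True]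
    by (rule tendsto_at_if_bracketed)
  then show ?thesis using True unfolding isCont_def extension_def by simp
next
  case False
  then show ?thesis by (rule isCont_extension_off_E)
qed

lemma extension_mem: "extension \<in> G"
proof (rule mem_if_pointwise)
  show "continuous_on UNIV extension"
    using isCont_extension by (simp add: continuous_at_imp_continuous_on)
  show "\<exists>g\<in>G. extension x = g x" for x
  proof (cases "x \<in> E")
    case True
    then show ?thesis using pointwise[OF True] by (simp add: extension_def)
  next
    case False
    then show ?thesis using gap_fun_mem[OF False] by (auto simp: extension_def)
  qed
qed

lemma member_agreeing_on_E: "\<exists>g\<in>G. \<forall>x\<in>E. f x = g x"
proof
  show "\<forall>x\<in>E. f x = extension x" by (simp add: extension_def)
qed (rule extension_mem)

end

definition pointwise_determined :: "(real \<Rightarrow> real) set \<Rightarrow> bool" where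
  "pointwise_determined G \<longleftrightarrow> (\<forall>f\<in>Cont. \<forall>E. closed E \<longrightarrow>
     (\<forall>x\<in>E. \<exists>g\<in>G. f x = g x) \<longrightarrow> (\<exists>g\<in>G. \<forall>x\<in>E. f x = g x))"

lemma pointwise_determinedD:
  assumes "pointwise_determined G" "f \<in> Cont" "closed E" "\<forall>x\<in>E. \<exists>g\<in>G. f x = g x"
  obtains g where "g \<in> G" "\<forall>x\<in>E. f x = g x"
  using assms unfolding pointwise_determined_def by blast

lemma K_fam_subset_iff_pointwise_determined:
  "K_fam G \<subseteq> {CL \<inter> Pow X | X. X \<subseteq> UNIV} \<longleftrightarrow> pointwise_determined G"
proof
  assume K: "K_fam G \<subseteq> {CL \<inter> Pow X | X. X \<subseteq> UNIV}"
  show "pointwise_determined G"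
    unfolding pointwise_determined_def
  proof (intro ballI allI impI)
    fix f E assume "f \<in> Cont" "closed E" and pw: "\<forall>x\<in>E. \<exists>g\<in>G. f x = g x"
    have "E_fam G {f} \<in> K_fam G" unfolding K_fam_def using \<open>f \<in> Cont\<close> by blast
    then obtain X where X: "E_fam G {f} = CL \<inter> Pow X" using K by auto
    have "{x} \<in> E_fam G {f}" if "x \<in> E" for x
      using pw that \<open>f \<in> Cont\<close> unfolding E_fam_def R_rel_def CL_def by auto
    then have "E \<subseteq> X" using X by auto
    then have "E \<in> E_fam G {f}" using X \<open>closed E\<close> unfolding CL_def by auto
    then show "\<exists>g\<in>G. \<forall>x\<in>E. f x = g x" unfolding E_fam_def R_rel_def by auto
  qed
next
  assume pd: "pointwise_determined G"
  show "K_fam G \<subseteq> {CL \<inter> Pow X | X. X \<subseteq> UNIV}"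
  proof
    fix K assume "K \<in> K_fam G"
    then obtain F where F: "F \<subseteq> Cont" "K = E_fam G F" unfolding K_fam_def by blast
    define X where "X = {x. \<forall>f\<in>F. \<exists>g\<in>G. f x = g x}"
    have "E_fam G F \<subseteq> CL \<inter> Pow X"
      unfolding E_fam_def R_rel_def X_def by auto
    moreover have "E \<in> E_fam G F" if "E \<in> CL" "E \<subseteq> X" for E
    proof -
      have "\<exists>g\<in>G. \<forall>x\<in>E. f x = g x" if "f \<in> F" for f
      proof -
        have "f \<in> Cont" "closed E" "\<forall>x\<in>E. \<exists>g\<in>G. f x = g x"
          using F(1) \<open>f \<in> F\<close> \<open>E \<in> CL\<close> \<open>E \<subseteq> X\<close> unfolding CL_def X_def by auto
        then show ?thesis using pd unfolding pointwise_determined_def by blast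
      qed
      then show ?thesis using \<open>E \<in> CL\<close> F(1) unfolding E_fam_def R_rel_def by auto
    qed
    ultimately have "K = CL \<inter> Pow X" using F(2) unfolding E_fam_def by auto
    then show "K \<in> {CL \<inter> Pow X | X. X \<subseteq> UNIV}" by blast
  qed
qed

lemma pointwise_determined_imp_complete:
  assumes "pointwise_determined G"
  shows "complete_family G"
  unfolding complete_family_def
proof (intro ballI impI)
  fix g assume "g \<in> Cont" "{(x, g x) | x. True} \<subseteq> graph_union G"
  then have "\<forall>x\<in>UNIV. \<exists>g'\<in>G. g x = g' x" unfolding graph_union_def by blast
  then obtain g' where "g' \<in> G" "\<forall>x\<in>UNIV. g x = g' x"
    using pointwise_determinedD[OF assms \<open>g \<in> Cont\<close> closed_UNIV] by blast
  moreover have "g = g'" using \<open>\<forall>x\<in>UNIV. g x = g' x\<close> by auto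
  ultimately show "g \<in> G" by simp
qed

lemma pointwise_determined_imp_connected:
  assumes "pointwise_determined G"
  shows "connected_family G"
  unfolding connected_family_def
proof (intro ballI allI impI)
  fix f g x y assume "f \<in> G" "g \<in> G" "x \<noteq> (y::real)"
  define line where "line = (\<lambda>t. f x + (t - x) * ((g y - f x) / (y - x)))"
  have "y - x \<noteq> 0" using \<open>x \<noteq> y\<close> by simp
  then have "line \<in> Cont" unfolding line_def Cont_def by (auto intro!: continuous_intros)
  have "line x = f x" "line y = g y" using \<open>y - x \<noteq> 0\<close> unfolding line_def by simp_all
  then have "\<forall>z\<in>{x, y}. \<exists>h\<in>G. line z = h z" using \<open>f \<in> G\<close> \<open>g \<in> G\<close> by auto
  moreover have "closed {x, y}" by simp
  ultimately obtain h where "h \<in> G" "\<forall>z\<in>{x, y}. line z = h z"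
    using pointwise_determinedD[OF assms \<open>line \<in> Cont\<close>] by blast
  then show "\<exists>h\<in>G. h x = f x \<and> h y = g y" using \<open>line x = f x\<close> \<open>line y = g y\<close> by auto
qed

lemma (in complete_connected_family) pointwise_determined: "pointwise_determined G"
  unfolding pointwise_determined_def
proof (intro ballI allI impI)
  fix f E assume "f \<in> Cont" "closed E" "\<forall>x\<in>E. \<exists>g\<in>G. f x = g x"
  then interpret pointwise_agreement G f E
    by (intro pointwise_agreement.intro pointwise_agreement_axioms.intro complete_connected_family_axioms)
      (auto simp: Cont_def)
  show "\<exists>g\<in>G. \<forall>x\<in>E. f x = g x" by (rule member_agreeing_on_E)
qed

theorem theorem4p5:
  fixes G :: "(real \<Rightarrow> real) set"
  assumes "G \<subseteq> Cont" and "G \<noteq> {}"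
  shows "K_fam G \<subseteq> {CL \<inter> Pow X | X. X \<subseteq> (UNIV :: real set)}
         \<longleftrightarrow> complete_family G \<and> connected_family G"
proof -
  have "pointwise_determined G \<longleftrightarrow> complete_family G \<and> connected_family G"
  proof
    assume "pointwise_determined G"
    then show "complete_family G \<and> connected_family G"
      using pointwise_determined_imp_complete pointwise_determined_imp_connected by blast
  next
    assume "complete_family G \<and> connected_family G"
    then interpret complete_connected_family G using assms by unfold_locales auto
    show "pointwise_determined G" by (rule pointwise_determined)
  qed
  then show ?thesis using K_fam_subset_iff_pointwise_determined by blast
qed

end
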